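(* Assume the standing assumptions below and, in addition, that LICQ holds for every subproblem, i.e. $\operatorname{rank}S_i=n_x$ for all $i=0,\dots,p-1$ (so $T_i$ is square and nonsingular). Then the subproblem multipliers of any KKT point of the expanded problem $E$ are uniquely determined and satisfy $$\lambda_{0,i}=\hat\lambda_{i-1},\quad i=0,\dots,p,$$ $$\lambda_{tc,i}=-\hat\lambda_i=-\lambda_{0,i+1},\quad i=0,\dots,p-1,$$ $$\lambda_{N_i,i}=-\lambda_{tc,i}=\lambda_{0,i+1},\quad i=0,\dots,p-1.$$
   Context: Problem $\mathrm{MPC}_N$ ($N\ge2$): variables $x_0,\dots,x_N\in\mathbb R^{n_x}$, $u_t\in\mathbb R^{n_{u,t}}$; minimize $\sum_{t=0}^{N-1}\big(\tfrac12[x_t;u_t]^TH_t[x_t;u_t]+f_t^T[x_t;u_t]+c_t\big)+\tfrac12x_N^TH_Nx_N+f_N^Tx_N+c_N$ s.t. $x_0=\bar x$, $x_{t+1}=A_tx_t+B_tu_t+a_t$. Standing assumptions: $H_t$ symmetric positive semidefinite with lower-right block $H_{u,t}$ positive definite, $H_N$ positive semidefinite, LICQ holds. Splitting: integer $1\le p<N$, $N_0,\dots,N_p\ge1$ with $\sum N_i=N$, $\tau_i=\sum_{j<i}N_j$; block data $A_{t,i}=A_{\tau_i+t}$, etc. (same for $B,a,H,f,c$), $t=0,\dots,N_i-1$, and $H_{N_p,p}=H_N$, $f_{N_p,p}=f_N$, $c_{N_p,p}=c_N$. Products $\prod_{t=t_0}^{t_1}A_t=A_{t_1}\cdots A_{t_0}$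 (empty $=I$). For $i<p$: $\mathcal A_i=\prod_{t=0}^{N_i-1}A_{t,i}$, $D_{j,i}=\prod_{s=j+1}^{N_i-1}A_{s,i}$, $D_i=[D_{0,i}\cdots D_{N_i-1,i}]$, $S_i=[D_{0,i}B_{0,i}\cdots D_{N_i-1,i}B_{N_i-1,i}]$, $\mathbf a_i=(a_{0,i};\dots;a_{N_i-1,i})$, $T_i$ a matrix whose columns form a basis of the range of $S_i$. Expanded problem $E$: variables $x_{t,i},u_{t,i}$ (all blocks $i=0,\dots,p$), $\bar x_0,\dots,\bar x_p$, $\bar d_0,\dots,\bar d_{p-1}$; objective $\sum_{i=0}^p\sum_{t=0}^{N_i-1}\big(\tfrac12[x_{t,i};u_{t,i}]^TH_{t,i}[x_{t,i};u_{t,i}]+f_{t,i}^T[x_{t,i};u_{t,i}]+c_{t,i}\big)+\tfrac12x_{N_p,p}^TH_{N_p,p}x_{N_p,p}+f_{N_p,p}^Tx_{N_p,p}+c_{N_p,p}$; constraints with multipliers: $x_{0,i}=\bar x_i$ ($\lambda_{0,i}$), $x_{t+1,i}=A_{t,i}x_{t,i}+B_{t,i}u_{t,i}+a_{t,i}$ ($\lambda_{t+1,i}$), for $i<p$: $x_{N_i,i}=\mathcal A_i\bar x_i+T_i\bar d_i+D_i\mathbf a_i$ ($\lambda_{tc,i}$); $\bar x_0=\bar x$ ($\hat\lambda_{-1}$); $\bar x_{i+1}=\mathcal A_i\bar x_i+T_i\bar d_i+D_i\mathbf a_i$, $i=0,\dots,p-1$ ($\hat\lambda_i$). Sign convention: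 for each constraint written $\ell=r$ (left side as displayed) with multiplier $\mu$, the Lagrangian is objective $+\sum\mu^T(r-\ell)$ and stationarity is vanishing of its gradient with respect to all variables. *)

theory Defs
  imports "Jordan_Normal_Form.DL_Rank"
begin

fun prodA :: "nat \<Rightarrow> (nat \<Rightarrow> real mat) \<Rightarrow> nat \<Rightarrow> nat \<Rightarrow> real mat" where
  "prodA nx A t0 0 = 1\<^sub>m nx"
| "prodA nx A t0 (Suc k) = A (t0 + k) * prodA nx A t0 k"

definition tau :: "(nat \<Rightarrow> nat) \<Rightarrow> nat \<Rightarrow> nat" where
  "tau Ns i = (\<Sum>j<i. Ns j)"

definition vsum :: "nat \<Rightarrow> real vec list \<Rightarrow> real vec" where
  "vsum nx vs = foldr (+) vs (0\<^sub>v nx)"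

(* \<A>_i = prod_{t=0}^{N_i-1} A_{t,i},  with A_{t,i} = A (tau_i + t) *)
definition calA :: "nat \<Rightarrow> (nat \<Rightarrow> real mat) \<Rightarrow> (nat \<Rightarrow> nat) \<Rightarrow> nat \<Rightarrow> real mat" where
  "calA nx A Ns i = prodA nx A (tau Ns i) (Ns i)"

definition Dji :: "nat \<Rightarrow> (nat \<Rightarrow> real mat) \<Rightarrow> (nat \<Rightarrow> nat) \<Rightarrow> nat \<Rightarrow> nat \<Rightarrow> real mat" where
  "Dji nx A Ns j i = prodA nx A (tau Ns i + j + 1) (Ns i - (j + 1))"

(* S_i = [D_{0,i} B_{0,i}  ...  D_{N_i-1,i} B_{N_i-1,i}]  (horizontal block concatenation) *)
definition Smat :: "nat \<Rightarrow> (nat \<Rightarrow> real mat) \<Rightarrow> (nat \<Rightarrow> real mat) \<Rightarrow> (nat \<Rightarrow> nat) \<Rightarrow> nat \<Rightarrow> real mat" where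
  "Smat nx A B Ns i =
     mat_of_cols nx (concat (map (\<lambda>j. cols (Dji nx A Ns j i * B (tau Ns i + j))) [0..<Ns i]))"

definition Da :: "nat \<Rightarrow> (nat \<Rightarrow> real mat) \<Rightarrow> (nat \<Rightarrow> real vec) \<Rightarrow> (nat \<Rightarrow> nat) \<Rightarrow> nat \<Rightarrow> real vec" where
  "Da nx A a Ns i = vsum nx (map (\<lambda>j. Dji nx A Ns j i *\<^sub>v a (tau Ns i + j)) [0..<Ns i])"

definition mat_range :: "real mat \<Rightarrow> real vec set" where
  "mat_range M = {M *\<^sub>v w | w. w \<in> carrier_vec (dim_col M)}"

definition cols_basis_of_range :: "real mat \<Rightarrow> real mat \<Rightarrow> bool" where
  "cols_basis_of_range T S \<longleftrightarrow>
     dim_row T = dim_row S \<and>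
     (\<forall>w\<in>carrier_vec (dim_col T). T *\<^sub>v w = 0\<^sub>v (dim_row T) \<longrightarrow> w = 0\<^sub>v (dim_col T)) \<and>
     mat_range T = mat_range S"

definition psd :: "nat \<Rightarrow> real mat \<Rightarrow> bool" where
  "psd n M \<longleftrightarrow> M \<in> carrier_mat n n \<and> (\<forall>v\<in>carrier_vec n. v \<bullet> (M *\<^sub>v v) \<ge> 0)"

definition pd :: "nat \<Rightarrow> real mat \<Rightarrow> bool" where
  "pd n M \<longleftrightarrow> M \<in> carrier_mat n n \<and> (\<forall>v\<in>carrier_vec n. v \<noteq> 0\<^sub>v n \<longrightarrow> v \<bullet> (M *\<^sub>v v) > 0)"

definition Huu :: "nat \<Rightarrow> nat \<Rightarrow> real mat \<Rightarrow> real mat" where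
  "Huu nx m M = mat m m (\<lambda>(r, c). M $$ (nx + r, nx + c))"

definition mpc_split_data :: "nat \<Rightarrow> (nat \<Rightarrow> nat) \<Rightarrow> nat \<Rightarrow>
    (nat \<Rightarrow> real mat) \<Rightarrow> (nat \<Rightarrow> real mat) \<Rightarrow> (nat \<Rightarrow> real vec) \<Rightarrow>
    (nat \<Rightarrow> real mat) \<Rightarrow> (nat \<Rightarrow> real vec) \<Rightarrow> real mat \<Rightarrow> real vec \<Rightarrow>
    nat \<Rightarrow> (nat \<Rightarrow> nat) \<Rightarrow> (nat \<Rightarrow> real mat) \<Rightarrow> bool" where
  "mpc_split_data nx nu N A B a H f HN fN p Ns T \<longleftrightarrow>
     N \<ge> 2 \<and> 1 \<le> p \<and> p < N \<and> (\<forall>i\<le>p. Ns i \<ge> 1) \<and> (\<Sum>i\<le>p. Ns i) = N \<and>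
     (\<forall>t<N. A t \<in> carrier_mat nx nx \<and> B t \<in> carrier_mat nx (nu t) \<and> a t \<in> carrier_vec nx \<and>
            H t \<in> carrier_mat (nx + nu t) (nx + nu t) \<and> f t \<in> carrier_vec (nx + nu t) \<and>
            transpose_mat (H t) = H t \<and> psd (nx + nu t) (H t) \<and> pd (nu t) (Huu nx (nu t) (H t))) \<and>
     psd nx HN \<and> fN \<in> carrier_vec nx \<and>
     (\<forall>i<p. T i \<in> carrier_mat nx (dim_col (T i)) \<and> cols_basis_of_range (T i) (Smat nx A B Ns i))"

(* KKT conditions of the expanded problem E (primal feasibility + stationarity of the
   Lagrangian  objective + sum mu^T (r - l)  w.r.t. all variables).
   Variables: x t i = x_{t,i}, u t i = u_{t,i}, xb i = \<bar>x_i, db i = \<bar>d_i;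
   multipliers: lam t i = \<lambda>_{t,i}, ltc i = \<lambda>_{tc,i}, lh j = \<hat>\<lambda>_j (j = -1..p-1). *)
definition KKT_E :: "nat \<Rightarrow> (nat \<Rightarrow> nat) \<Rightarrow>
    (nat \<Rightarrow> real mat) \<Rightarrow> (nat \<Rightarrow> real mat) \<Rightarrow> (nat \<Rightarrow> real vec) \<Rightarrow>
    (nat \<Rightarrow> real mat) \<Rightarrow> (nat \<Rightarrow> real vec) \<Rightarrow> real mat \<Rightarrow> real vec \<Rightarrow>
    nat \<Rightarrow> (nat \<Rightarrow> nat) \<Rightarrow> (nat \<Rightarrow> real mat) \<Rightarrow> real vec \<Rightarrow>
    (nat \<Rightarrow> nat \<Rightarrow> real vec) \<Rightarrow> (nat \<Rightarrow> nat \<Rightarrow> real vec) \<Rightarrow> (nat \<Rightarrow> real vec) \<Rightarrow> (nat \<Rightarrow> real vec) \<Rightarrow>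
    (nat \<Rightarrow> nat \<Rightarrow> real vec) \<Rightarrow> (nat \<Rightarrow> real vec) \<Rightarrow> (int \<Rightarrow> real vec) \<Rightarrow> bool" where
  "KKT_E nx nu A B a H f HN fN p Ns T xbar x u xb db lam ltc lh \<longleftrightarrow>
     \<comment> \<open>dimensions of variables and multipliers\<close>
     (\<forall>i\<le>p. \<forall>t\<le>Ns i. x t i \<in> carrier_vec nx \<and> lam t i \<in> carrier_vec nx) \<and>
     (\<forall>i\<le>p. \<forall>t<Ns i. u t i \<in> carrier_vec (nu (tau Ns i + t))) \<and>
     (\<forall>i\<le>p. xb i \<in> carrier_vec nx) \<and>
     (\<forall>i<p. db i \<in> carrier_vec (dim_col (T i)) \<and> ltc i \<in> carrier_vec nx) \<and>
     (\<forall>j::int. -1 \<le> j \<and> j \<le> int p - 1 \<longrightarrow> lh j \<in> carrier_vec nx) \<and>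
     \<comment> \<open>primal feasibility\<close>
     (\<forall>i\<le>p. x 0 i = xb i) \<and>
     (\<forall>i\<le>p. \<forall>t<Ns i. x (Suc t) i =
         A (tau Ns i + t) *\<^sub>v x t i + B (tau Ns i + t) *\<^sub>v u t i + a (tau Ns i + t)) \<and>
     (\<forall>i<p. x (Ns i) i = calA nx A Ns i *\<^sub>v xb i + T i *\<^sub>v db i + Da nx A a Ns i) \<and>
     xb 0 = xbar \<and>
     (\<forall>i<p. xb (Suc i) = calA nx A Ns i *\<^sub>v xb i + T i *\<^sub>v db i + Da nx A a Ns i) \<and>
     \<comment> \<open>stationarity w.r.t. x_{t,i} and u_{t,i}, t < N_i\<close>
     (\<forall>i\<le>p. \<forall>t<Ns i.
        (let k = tau Ns i + t; g = H k *\<^sub>v (x t i @\<^sub>v u t i) + f k in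
          vec nx (\<lambda>r. g $ r) + transpose_mat (A k) *\<^sub>v lam (Suc t) i - lam t i = 0\<^sub>v nx \<and>
          vec (nu k) (\<lambda>r. g $ (nx + r)) + transpose_mat (B k) *\<^sub>v lam (Suc t) i = 0\<^sub>v (nu k))) \<and>
     \<comment> \<open>stationarity w.r.t. x_{N_i,i}\<close>
     (\<forall>i<p. - lam (Ns i) i - ltc i = 0\<^sub>v nx) \<and>
     HN *\<^sub>v x (Ns p) p + fN - lam (Ns p) p = 0\<^sub>v nx \<and>
     \<comment> \<open>stationarity w.r.t. \<bar>x_i\<close>
     (\<forall>i<p. lam 0 i - lh (int i - 1) + transpose_mat (calA nx A Ns i) *\<^sub>v (ltc i + lh (int i)) = 0\<^sub>v nx) \<and>
     lam 0 p - lh (int p - 1) = 0\<^sub>v nx \<and>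
     \<comment> \<open>stationarity w.r.t. \<bar>d_i\<close>
     (\<forall>i<p. transpose_mat (T i) *\<^sub>v (ltc i + lh (int i)) = 0\<^sub>v (dim_col (T i)))"

end

theory Submission imports Defs begin

(* The argument has three ingredients.
   (1) Linear algebra: a real matrix S with full row rank n has range all of R^n.  If the
       columns of T span the range of S, then T has full range as well, hence T^T is injective:
       T^T v = 0 and v = T w give v.v = (T^T v).w = 0.
   (2) Multiplier relations: stationarity w.r.t. d_i says T_i^T (lam_tc,i + lamhat_i) = 0, so by (1)
       lam_tc,i = -lamhat_i.  Then the stationarity condition w.r.t. xbar_i collapses to
       lam_0,i = lamhat_(i-1), and stationarity w.r.t. x_(N_i,i) gives lam_(N_i,i) = -lam_tc,i.
       Together, the end multiplier of block i equals the initial multiplier of block i+1.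
   (3) Uniqueness by backward recursion: the terminal condition fixes lam_(N_p,p); stationarity
       w.r.t. x_(t,i) determines lam_(t,i) from lam_(t+1,i); and by (2) the block link
       lam_(N_i,i) = lam_(0,i+1) passes the recursion from block i+1 to block i. *)

lemma vec_diff_eq_zero_iff:
  fixes a b :: "'a :: ab_group_add vec"
  assumes "a \<in> carrier_vec n" "b \<in> carrier_vec n"
  shows "a - b = 0\<^sub>v n \<longleftrightarrow> a = b"
  using assms by (auto simp: vec_eq_iff)

lemma vec_sum_eq_zero_iff:
  fixes a b :: "'a :: ab_group_add vec"
  assumes "a \<in> carrier_vec n" "b \<in> carrier_vec n"
  shows "a + b = 0\<^sub>v n \<longleftrightarrow> a = - b"
  using assms by (auto simp: vec_eq_iff eq_neg_iff_add_eq_0)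

text \<open>Two vectors subtracted from the same vector with zero result coincide; the minuend need
  not be known to have the right dimension.\<close>

lemma vec_cancel_common_minuend:
  fixes a b c :: "'a :: ab_group_add vec"
  assumes "a \<in> carrier_vec n" "b \<in> carrier_vec n" "c - a = 0\<^sub>v n" "c - b = 0\<^sub>v n"
  shows "a = b"
proof (rule eq_vecI)
  fix j assume "j < dim_vec b"
  then have "c $ j - a $ j = 0" "c $ j - b $ j = 0"
    using assms by (metis carrier_vecD index_minus_vec(1) index_zero_vec(1))+
  then show "a $ j = b $ j" by simp
qed (use assms in auto)

lemma mult_mat_vec_zero: "M *\<^sub>v 0\<^sub>v n = (0\<^sub>v (dim_row M) :: 'a :: semiring_0 vec)"
  by (intro eq_vecI) (auto simp: mult_mat_vec_def scalar_prod_def)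

lemma (in vec_space) full_rank_onto:
  assumes A: "A \<in> carrier_mat n nc" and rank: "rank A = n" and y: "y \<in> carrier_vec n"
  shows "\<exists>w\<in>carrier_vec nc. y = A *\<^sub>v w"
proof -
  have cols: "set (cols A) \<subseteq> carrier_vec n" using A cols_dim by blast
  obtain U where U: "finite U" "maximal U (\<lambda>T. T \<subseteq> set (cols A) \<and> lin_indpt T)"
    using maximal_exists_superset[of "set (cols A)" "\<lambda>T. T \<subseteq> set (cols A) \<and> lin_indpt T" "{}"]
    by (auto simp: lin_dep_def)
  then have U_cols: "U \<subseteq> set (cols A)" and U_indpt: "lin_indpt U"
    unfolding maximal_def by auto
  have "card U = n" using rank_card_indpt[OF A U(2)] rank by simp
  then have "basis U"
    using dim_li_is_basis[OF fin_dim U(1) _ U_indpt] U_cols cols dim_is_n by auto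
  then have "y \<in> span U" using y unfolding basis_def by auto
  then have "y \<in> span (set (cols A))" using span_is_monotone[OF U_cols] by auto
  then obtain c where "y = lincomb_list c (cols A)"
    using span_list_as_span[OF cols[simplified]] by (auto elim: in_span_listE)
  also have "\<dots> = mat_of_cols n (cols A) *\<^sub>v vec (length (cols A)) c"
    by (rule lincomb_list_as_mat_mult) (use cols in auto)
  also have "\<dots> = A *\<^sub>v vec nc c" using A mat_of_cols_cols[of A] by auto
  finally show ?thesis by auto
qed

lemma mat_range_carrier: "mat_range M \<subseteq> carrier_vec (dim_row M)"
  unfolding mat_range_def carrier_vec_def by auto

lemma full_rank_mat_range:
  fixes A :: "real mat"
  assumes A: "A \<in> carrier_mat n nc" and rank: "vec_space.rank n A = n"
  shows "mat_range A = carrier_vec n"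
proof
  show "mat_range A \<subseteq> carrier_vec n"
    using mat_range_carrier[of A] A by simp
  show "carrier_vec n \<subseteq> mat_range A"
    using vec_space.full_rank_onto[OF A rank] A unfolding mat_range_def by blast
qed

lemma transpose_kernel_trivial:
  fixes T :: "real mat"
  assumes T: "T \<in> carrier_mat n k" and onto: "mat_range T = carrier_vec n"
    and v: "v \<in> carrier_vec n" and kernel: "transpose_mat T *\<^sub>v v = 0\<^sub>v k"
  shows "v = 0\<^sub>v n"
proof -
  obtain w where w: "w \<in> carrier_vec k" "v = T *\<^sub>v w"
    using v onto T unfolding mat_range_def by auto
  have "v \<bullet> v = (transpose_mat T *\<^sub>v v) \<bullet> w"
    using transpose_vec_mult_scalar[OF T w(1) v] w(2) by simp
  also have "\<dots> = 0" using kernel w(1) by simp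
  finally show ?thesis using conjugate_square_eq_0_vec[OF v] by simp
qed

text \<open>A basis of the range of a full-row-rank matrix has an injective transpose; this is how
  the LICQ assumption on the subproblems enters.\<close>

lemma range_basis_transpose_injective:
  fixes T S :: "real mat"
  assumes basis: "cols_basis_of_range T S" and S: "S \<in> carrier_mat n m"
    and rank: "vec_space.rank n S = n"
    and v: "v \<in> carrier_vec n" and kernel: "transpose_mat T *\<^sub>v v = 0\<^sub>v (dim_col T)"
  shows "v = 0\<^sub>v n"
proof -
  have "dim_row T = dim_row S" and ranges: "mat_range T = mat_range S"
    using basis unfolding cols_basis_of_range_def by blast+
  then have T: "T \<in> carrier_mat n (dim_col T)"
    using S by auto
  have "mat_range T = carrier_vec n"
    using ranges full_rank_mat_range[OF S rank] by simp
  then show ?thesis using transpose_kernel_trivial[OF T _ v kernel] by blast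
qed

lemma Smat_carrier: "Smat nx A B Ns i \<in> carrier_mat nx (dim_col (Smat nx A B Ns i))"
  unfolding Smat_def by auto

lemma dim_col_prodA: "dim_col (prodA nx A t0 k) = nx"
  by (induction k) auto

lemma KKT_E_carriers:
  assumes "KKT_E nx nu A B a H f HN fN p Ns T xbar x u xb db lam ltc lh"
  shows "i \<le> p \<Longrightarrow> t \<le> Ns i \<Longrightarrow> lam t i \<in> carrier_vec nx"
    and "i < p \<Longrightarrow> ltc i \<in> carrier_vec nx"
    and "-1 \<le> j \<Longrightarrow> j \<le> int p - 1 \<Longrightarrow> lh j \<in> carrier_vec nx"
  using assms unfolding KKT_E_def by (meson order_refl)+

lemma KKT_E_terminal_multiplier:
  assumes data: "mpc_split_data nx nu N A B a H f HN fN p Ns T"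
    and licq_sub: "\<forall>i<p. vec_space.rank nx (Smat nx A B Ns i) = nx"
    and kkt: "KKT_E nx nu A B a H f HN fN p Ns T xbar x u xb db lam ltc lh"
    and i: "i < p"
  shows "ltc i = - lh (int i)"
proof -
  have basis: "cols_basis_of_range (T i) (Smat nx A B Ns i)"
    using data i unfolding mpc_split_data_def by auto
  have "\<forall>i<p. transpose_mat (T i) *\<^sub>v (ltc i + lh (int i)) = 0\<^sub>v (dim_col (T i))"
    using kkt unfolding KKT_E_def by (elim conjE) assumption
  then have stat_d: "transpose_mat (T i) *\<^sub>v (ltc i + lh (int i)) = 0\<^sub>v (dim_col (T i))"
    using i by blast
  have ltc: "ltc i \<in> carrier_vec nx" and lh: "lh (int i) \<in> carrier_vec nx"
    using KKT_E_carriers[OF kkt] i by auto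
  have "ltc i + lh (int i) = 0\<^sub>v nx"
    using range_basis_transpose_injective[OF basis Smat_carrier licq_sub[rule_format, OF i] _ stat_d]
      ltc lh by auto
  then show ?thesis using vec_sum_eq_zero_iff[OF ltc lh] by simp
qed

text \<open>Stationarity w.r.t. xbar_i: the initial multiplier of every block is the preceding
  coupling multiplier (the term with calA_i^T vanishes by the previous lemma).\<close>

lemma KKT_E_initial_multiplier:
  assumes data: "mpc_split_data nx nu N A B a H f HN fN p Ns T"
    and licq_sub: "\<forall>i<p. vec_space.rank nx (Smat nx A B Ns i) = nx"
    and kkt: "KKT_E nx nu A B a H f HN fN p Ns T xbar x u xb db lam ltc lh"
    and i: "i \<le> p"
  shows "lam 0 i = lh (int i - 1)"
proof -
  have lam0: "lam 0 i \<in> carrier_vec nx" and lh: "lh (int i - 1) \<in> carrier_vec nx"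
    using KKT_E_carriers[OF kkt] i by auto
  have "lam 0 i - lh (int i - 1) = 0\<^sub>v nx"
  proof (cases "i < p")
    case True
    have "\<forall>i<p. lam 0 i - lh (int i - 1)
        + transpose_mat (calA nx A Ns i) *\<^sub>v (ltc i + lh (int i)) = 0\<^sub>v nx"
      using kkt unfolding KKT_E_def by (elim conjE) assumption
    then have stat_xb: "lam 0 i - lh (int i - 1)
        + transpose_mat (calA nx A Ns i) *\<^sub>v (ltc i + lh (int i)) = 0\<^sub>v nx"
      using True by blast
    have "ltc i + lh (int i) = 0\<^sub>v nx"
      using KKT_E_terminal_multiplier[OF data licq_sub kkt True] KKT_E_carriers(3)[OF kkt, of "int i"]
        True by auto
    moreover have "dim_col (calA nx A Ns i) = nx" by (simp add: calA_def dim_col_prodA)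
    ultimately have "transpose_mat (calA nx A Ns i) *\<^sub>v (ltc i + lh (int i)) = 0\<^sub>v nx"
      by (simp add: mult_mat_vec_zero)
    then show ?thesis using stat_xb lam0 lh by simp
  next
    case False
    have "lam 0 p - lh (int p - 1) = 0\<^sub>v nx"
      using kkt unfolding KKT_E_def by (elim conjE) assumption
    then show ?thesis using False i by simp
  qed
  then show ?thesis using vec_diff_eq_zero_iff[OF lam0 lh] by simp
qed

lemma KKT_E_end_multiplier:
  assumes kkt: "KKT_E nx nu A B a H f HN fN p Ns T xbar x u xb db lam ltc lh"
    and i: "i < p"
  shows "lam (Ns i) i = - ltc i"
proof -
  have lamN: "- lam (Ns i) i \<in> carrier_vec nx" and ltc: "ltc i \<in> carrier_vec nx"
    using KKT_E_carriers[OF kkt] i by auto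
  have "\<forall>i<p. - lam (Ns i) i - ltc i = 0\<^sub>v nx"
    using kkt unfolding KKT_E_def by (elim conjE) assumption
  then have "- lam (Ns i) i - ltc i = 0\<^sub>v nx" using i by blast
  then have "- lam (Ns i) i = ltc i" using vec_diff_eq_zero_iff[OF lamN ltc] by simp
  then show ?thesis by (metis uminus_uminus_vec)
qed

lemma KKT_E_block_link:
  assumes data: "mpc_split_data nx nu N A B a H f HN fN p Ns T"
    and licq_sub: "\<forall>i<p. vec_space.rank nx (Smat nx A B Ns i) = nx"
    and kkt: "KKT_E nx nu A B a H f HN fN p Ns T xbar x u xb db lam ltc lh"
    and i: "i < p"
  shows "lam (Ns i) i = lam 0 (Suc i)"
proof -
  have "lam (Ns i) i = - ltc i" by (rule KKT_E_end_multiplier[OF kkt i])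
  also have "\<dots> = lh (int i)"
    using KKT_E_terminal_multiplier[OF data licq_sub kkt i] by simp
  also have "\<dots> = lam 0 (Suc i)"
    using KKT_E_initial_multiplier[OF data licq_sub kkt, of "Suc i"] i by simp
  finally show ?thesis .
qed

lemma KKT_E_final_multiplier_determined:
  assumes kkt: "KKT_E nx nu A B a H f HN fN p Ns T xbar x u xb db lam ltc lh"
    and kkt': "KKT_E nx nu A B a H f HN fN p Ns T xbar x u xb db lam' ltc' lh'"
  shows "lam' (Ns p) p = lam (Ns p) p"
proof (rule vec_cancel_common_minuend)
  show "HN *\<^sub>v x (Ns p) p + fN - lam' (Ns p) p = 0\<^sub>v nx"
    using kkt' unfolding KKT_E_def by (elim conjE) assumption
  show "HN *\<^sub>v x (Ns p) p + fN - lam (Ns p) p = 0\<^sub>v nx"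
    using kkt unfolding KKT_E_def by (elim conjE) assumption
qed (use KKT_E_carriers(1)[OF kkt] KKT_E_carriers(1)[OF kkt'] in auto)

lemma KKT_E_costate_step_determined:
  assumes kkt: "KKT_E nx nu A B a H f HN fN p Ns T xbar x u xb db lam ltc lh"
    and kkt': "KKT_E nx nu A B a H f HN fN p Ns T xbar x u xb db lam' ltc' lh'"
    and i: "i \<le> p" and t: "t < Ns i" and next_eq: "lam' (Suc t) i = lam (Suc t) i"
  shows "lam' t i = lam t i"
proof -
  define c where "c lam = (let k = tau Ns i + t; g = H k *\<^sub>v (x t i @\<^sub>v u t i) + f k in
    vec nx (\<lambda>r. g $ r) + transpose_mat (A k) *\<^sub>v lam (Suc t) i)" for lam :: "nat \<Rightarrow> nat \<Rightarrow> real vec"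
  have stat_x: "c lam - lam t i = 0\<^sub>v nx"
    if "KKT_E nx nu A B a H f HN fN p Ns T xbar x u xb db lam ltc lh" for lam ltc lh
  proof -
    have "\<forall>i\<le>p. \<forall>t<Ns i.
        (let k = tau Ns i + t; g = H k *\<^sub>v (x t i @\<^sub>v u t i) + f k in
          vec nx (\<lambda>r. g $ r) + transpose_mat (A k) *\<^sub>v lam (Suc t) i - lam t i = 0\<^sub>v nx \<and>
          vec (nu k) (\<lambda>r. g $ (nx + r)) + transpose_mat (B k) *\<^sub>v lam (Suc t) i = 0\<^sub>v (nu k))"
      using that unfolding KKT_E_def by (elim conjE) assumption
    then show ?thesis using i t unfolding c_def Let_def by blast
  qed
  have "c lam' = c lam" unfolding c_def using next_eq by simp
  then show ?thesis
    using vec_cancel_common_minuend stat_x[OF kkt] stat_x[OF kkt']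
      KKT_E_carriers(1)[OF kkt] KKT_E_carriers(1)[OF kkt'] i t
    by (metis less_imp_le)
qed

lemma KKT_E_block_determined:
  assumes kkt: "KKT_E nx nu A B a H f HN fN p Ns T xbar x u xb db lam ltc lh"
    and kkt': "KKT_E nx nu A B a H f HN fN p Ns T xbar x u xb db lam' ltc' lh'"
    and i: "i \<le> p" and end_eq: "lam' (Ns i) i = lam (Ns i) i"
    and t: "t \<le> Ns i"
  shows "lam' t i = lam t i"
  using t
proof (induction rule: inc_induct)
  case base
  show ?case by (fact end_eq)
next
  case (step t)
  then show ?case using KKT_E_costate_step_determined[OF kkt kkt' i] by blast
qed

lemma KKT_E_multipliers_unique:
  assumes data: "mpc_split_data nx nu N A B a H f HN fN p Ns T"
    and licq_sub: "\<forall>i<p. vec_space.rank nx (Smat nx A B Ns i) = nx"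
    and kkt: "KKT_E nx nu A B a H f HN fN p Ns T xbar x u xb db lam ltc lh"
    and kkt': "KKT_E nx nu A B a H f HN fN p Ns T xbar x u xb db lam' ltc' lh'"
  shows "(\<forall>i\<le>p. \<forall>t\<le>Ns i. lam' t i = lam t i) \<and> (\<forall>i<p. ltc' i = ltc i)"
proof -
  have block: "\<forall>t\<le>Ns i. lam' t i = lam t i" if "i \<le> p" for i
    using that
  proof (induction rule: inc_induct)
    case base
    show ?case using KKT_E_block_determined[OF kkt kkt' order_refl]
        KKT_E_final_multiplier_determined[OF kkt kkt'] by blast
  next
    case (step i)
    then have "lam' 0 (Suc i) = lam 0 (Suc i)" by blast
    then have "lam' (Ns i) i = lam (Ns i) i"
      using KKT_E_block_link[OF data licq_sub kkt step(2)]
        KKT_E_block_link[OF data licq_sub kkt' step(2)] by simp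
    then show ?case using KKT_E_block_determined[OF kkt kkt'] step(2) by simp
  qed
  moreover have "ltc' i = ltc i" if "i < p" for i
  proof -
    have "- ltc' i = - ltc i"
      using block[of i] that KKT_E_end_multiplier[OF kkt that] KKT_E_end_multiplier[OF kkt' that]
      by simp
    then show ?thesis by (metis uminus_uminus_vec)
  qed
  ultimately show ?thesis by blast
qed

theorem corollary1:
  assumes data: "mpc_split_data nx nu N A B a H f HN fN p Ns T"
    and xbar: "xbar \<in> carrier_vec nx"
    and licq_sub: "\<forall>i<p. vec_space.rank nx (Smat nx A B Ns i) = nx"
    and kkt: "KKT_E nx nu A B a H f HN fN p Ns T xbar x u xb db lam ltc lh"
  shows "(\<forall>lam' ltc' lh'. KKT_E nx nu A B a H f HN fN p Ns T xbar x u xb db lam' ltc' lh' \<longrightarrow>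
            (\<forall>i\<le>p. \<forall>t\<le>Ns i. lam' t i = lam t i) \<and> (\<forall>i<p. ltc' i = ltc i))
       \<and> (\<forall>i\<le>p. lam 0 i = lh (int i - 1))
       \<and> (\<forall>i<p. ltc i = - lh (int i) \<and> - lh (int i) = - lam 0 (Suc i))
       \<and> (\<forall>i<p. lam (Ns i) i = - ltc i \<and> - ltc i = lam 0 (Suc i))"
proof -
  have unique: "\<forall>lam' ltc' lh'. KKT_E nx nu A B a H f HN fN p Ns T xbar x u xb db lam' ltc' lh' \<longrightarrow>
      (\<forall>i\<le>p. \<forall>t\<le>Ns i. lam' t i = lam t i) \<and> (\<forall>i<p. ltc' i = ltc i)"
    using KKT_E_multipliers_unique[OF data licq_sub kkt] by blast
  have initial: "\<forall>i\<le>p. lam 0 i = lh (int i - 1)"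
    using KKT_E_initial_multiplier[OF data licq_sub kkt] by blast
  have coupling: "ltc i = - lh (int i) \<and> - lh (int i) = - lam 0 (Suc i)" if i: "i < p" for i
    using KKT_E_terminal_multiplier[OF data licq_sub kkt i] initial i by simp
  have block_end: "lam (Ns i) i = - ltc i \<and> - ltc i = lam 0 (Suc i)" if i: "i < p" for i
    using KKT_E_end_multiplier[OF kkt i] KKT_E_block_link[OF data licq_sub kkt i] by simp
  show ?thesis using unique initial coupling block_end by blast
qed

end
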